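(* Let $G$ be a countably infinite connected HE-homogeneous graph that contains a pair of distinct non-adjacent vertices. Then $G$ has no finite maximal independent sets and no finite maximal cliques. In particular, every vertex of $G$ has infinite degree and infinite codegree.
   Context: All graphs are undirected and loopless; subgraphs are induced. The codegree of a vertex is its degree in the complement graph. A homomorphism maps adjacent vertices to adjacent vertices. $G$ is HE-homogeneous if every homomorphism between finite induced subgraphs of $G$ is the restriction of a surjective endomorphism of $G$. *)

theory Defs
  imports Main "HOL-Library.Countable_Set"
begin

text \<open>A simple graph is given by a vertex set V and an edge relation E that is
symmetric and irreflexive on V. Only the restriction of E to V matters.\<close>

definition simple_graph :: "'a set \<Rightarrow> ('a \<Rightarrow> 'a \<Rightarrow> bool) \<Rightarrow> bool" where
  "simple_graph V E \<longleftrightarrow> (\<forall>x\<in>V. \<forall>y\<in>V. E x y \<longrightarrow> E y x) \<and> (\<forall>x\<in>V. \<not> E x x)"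

definition connected_graph :: "'a set \<Rightarrow> ('a \<Rightarrow> 'a \<Rightarrow> bool) \<Rightarrow> bool" where
  "connected_graph V E \<longleftrightarrow> V \<noteq> {} \<and>
     (\<forall>u\<in>V. \<forall>v\<in>V. (\<lambda>x y. x \<in> V \<and> y \<in> V \<and> E x y)\<^sup>*\<^sup>* u v)"

definition graph_hom :: "('a \<Rightarrow> 'a \<Rightarrow> bool) \<Rightarrow> 'a set \<Rightarrow> 'a set \<Rightarrow> ('a \<Rightarrow> 'a) \<Rightarrow> bool" where
  "graph_hom E A B f \<longleftrightarrow> (\<forall>x\<in>A. f x \<in> B) \<and> (\<forall>x\<in>A. \<forall>y\<in>A. E x y \<longrightarrow> E (f x) (f y))"

definition HE_homogeneous :: "'a set \<Rightarrow> ('a \<Rightarrow> 'a \<Rightarrow> bool) \<Rightarrow> bool" where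
  "HE_homogeneous V E \<longleftrightarrow>
     (\<forall>A B f. A \<subseteq> V \<and> B \<subseteq> V \<and> finite A \<and> finite B \<and> graph_hom E A B f \<longrightarrow>
        (\<exists>g. graph_hom E V V g \<and> g ` V = V \<and> (\<forall>x\<in>A. g x = f x)))"

definition independent_set :: "'a set \<Rightarrow> ('a \<Rightarrow> 'a \<Rightarrow> bool) \<Rightarrow> 'a set \<Rightarrow> bool" where
  "independent_set V E I \<longleftrightarrow> I \<subseteq> V \<and> (\<forall>x\<in>I. \<forall>y\<in>I. \<not> E x y)"

definition clique :: "'a set \<Rightarrow> ('a \<Rightarrow> 'a \<Rightarrow> bool) \<Rightarrow> 'a set \<Rightarrow> bool" where
  "clique V E C \<longleftrightarrow> C \<subseteq> V \<and> (\<forall>x\<in>C. \<forall>y\<in>C. x \<noteq> y \<longrightarrow> E x y)"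

definition maximal_independent_set :: "'a set \<Rightarrow> ('a \<Rightarrow> 'a \<Rightarrow> bool) \<Rightarrow> 'a set \<Rightarrow> bool" where
  "maximal_independent_set V E I \<longleftrightarrow> independent_set V E I \<and>
     (\<forall>J. independent_set V E J \<and> I \<subseteq> J \<longrightarrow> J = I)"

definition maximal_clique :: "'a set \<Rightarrow> ('a \<Rightarrow> 'a \<Rightarrow> bool) \<Rightarrow> 'a set \<Rightarrow> bool" where
  "maximal_clique V E C \<longleftrightarrow> clique V E C \<and>
     (\<forall>D. clique V E D \<and> C \<subseteq> D \<longrightarrow> D = C)"

definition degree_set :: "'a set \<Rightarrow> ('a \<Rightarrow> 'a \<Rightarrow> bool) \<Rightarrow> 'a \<Rightarrow> 'a set" where
  "degree_set V E v = {u \<in> V. E v u}"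

definition codegree_set :: "'a set \<Rightarrow> ('a \<Rightarrow> 'a \<Rightarrow> bool) \<Rightarrow> 'a \<Rightarrow> 'a set" where
  "codegree_set V E v = {u \<in> V. u \<noteq> v \<and> \<not> E v u}"

end

theory Submission
  imports Defs
begin

text \<open>
  A finite maximal independent set I can be collapsed onto one end x of a non-edge xy; a
  surjective extension g of this collapse sends some w \<notin> I to y, and w, being adjacent to
  I by maximality, forces y to be adjacent to x. For a finite maximal clique C, connectedness
  gives an edge from some c \<in> C to some u \<notin> C; the bijection (C - {c}) \<union> {u} \<rightarrow> C that
  replaces u by c extends to an endomorphism g, and g c is then adjacent to all of C,
  enlarging C. Finally, if v had finite degree (codegree), every clique (independent set)
  through v would live in a fixed finite set, so a finite maximal one would exist.
\<close>

lemma rtranclp_leaves_set: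
  assumes "R\<^sup>*\<^sup>* a b" "a \<in> S" "b \<notin> S"
  shows "\<exists>x y. R x y \<and> x \<in> S \<and> y \<notin> S"
  using assms by (induction rule: rtranclp_induct) blast+

lemma connected_graph_edge_leaving:
  assumes "connected_graph V E" "S \<subseteq> V" "S \<noteq> {}" "\<not> V \<subseteq> S"
  obtains x y where "x \<in> S" "y \<in> V - S" "E x y"
proof -
  obtain a b where ab: "a \<in> S" "b \<in> V" "b \<notin> S"
    using assms(3,4) by blast
  then have "(\<lambda>x y. x \<in> V \<and> y \<in> V \<and> E x y)\<^sup>*\<^sup>* a b"
    using assms(1,2) unfolding connected_graph_def by blast
  from rtranclp_leaves_set[OF this ab(1,3)] show thesis
    using that by blast
qed

lemma ex_finite_maximal_extension:
  assumes "finite F" "P I\<^sub>0" and bounded: "\<And>J. P J \<Longrightarrow> I\<^sub>0 \<subseteq> J \<Longrightarrow> J \<subseteq> F"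
  obtains I where "finite I" "P I" "I\<^sub>0 \<subseteq> I" "\<And>J. P J \<Longrightarrow> I \<subseteq> J \<Longrightarrow> J = I"
proof -
  let ?A = "{J. P J \<and> I\<^sub>0 \<subseteq> J}"
  have "?A \<subseteq> Pow F"
    using bounded by blast
  then have "finite ?A"
    using assms(1) finite_subset by blast
  moreover have "I\<^sub>0 \<in> ?A"
    using assms(2) by simp
  ultimately obtain I where I: "I \<in> ?A" "\<forall>J\<in>?A. I \<subseteq> J \<longrightarrow> I = J"
    using finite_has_maximal2 by meson
  have "finite I"
    using I(1) bounded by (blast intro: finite_subset[OF _ assms(1)])
  show thesis
  proof (rule that)
    show "finite I" "P I" "I\<^sub>0 \<subseteq> I" using \<open>finite I\<close> I(1) by auto
    show "J = I" if "P J" "I \<subseteq> J" for J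
      using I that by blast
  qed
qed

lemma HE_homogeneous_extend:
  assumes "HE_homogeneous V E" "A \<subseteq> V" "B \<subseteq> V" "finite A" "finite B" "graph_hom E A B f"
  obtains g where "graph_hom E V V g" "g ` V = V" "\<And>x. x \<in> A \<Longrightarrow> g x = f x"
proof -
  have "\<exists>g. graph_hom E V V g \<and> g ` V = V \<and> (\<forall>x\<in>A. g x = f x)"
    using assms(1)[unfolded HE_homogeneous_def, rule_format, of A B f] assms(2-6) by blast
  then show thesis
    using that by blast
qed

lemma graph_hom_inj_on_into_clique:
  assumes "clique V E C" "\<forall>x\<in>X. \<not> E x x" "inj_on f X" "f ` X \<subseteq> C"
  shows "graph_hom E X C f"
  unfolding graph_hom_def
proof (intro conjI ballI impI)
  show "f x \<in> C" if "x \<in> X" for x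
    using that assms(4) by blast
  show "E (f x) (f y)" if "x \<in> X" "y \<in> X" "E x y" for x y
  proof -
    have "f x \<noteq> f y"
      using that assms(2,3) by (metis inj_onD)
    then show ?thesis
      using that assms(1,4) unfolding clique_def by blast
  qed
qed

lemma no_finite_maximal_independent_set:
  assumes "simple_graph V E" "HE_homogeneous V E"
    and "x \<in> V" "y \<in> V" "x \<noteq> y" "\<not> E x y" and "finite I"
  shows "\<not> maximal_independent_set V E I"
proof
  assume max: "maximal_independent_set V E I"
  then have IV: "I \<subseteq> V" and indep: "\<forall>a\<in>I. \<forall>b\<in>I. \<not> E a b"
    unfolding maximal_independent_set_def independent_set_def by auto
  have irrefl: "\<forall>x\<in>V. \<not> E x x" and sym: "\<forall>x\<in>V. \<forall>y\<in>V. E x y \<longrightarrow> E y x"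
    using assms(1) unfolding simple_graph_def by auto
  have "graph_hom E I {x} (\<lambda>_. x)"
    using indep unfolding graph_hom_def by auto
  then obtain g where g: "graph_hom E V V g" "g ` V = V" "\<And>a. a \<in> I \<Longrightarrow> g a = x"
    using HE_homogeneous_extend[OF assms(2) IV _ \<open>finite I\<close>] \<open>x \<in> V\<close> by blast
  obtain w where w: "w \<in> V" "g w = y"
    using g(2) \<open>y \<in> V\<close> by (metis imageE)
  have "w \<notin> I"
    using g(3) w(2) \<open>x \<noteq> y\<close> by auto
  then have "\<not> independent_set V E (insert w I)"
    using max unfolding maximal_independent_set_def by blast
  then obtain a where a: "a \<in> I" "E w a"
    using IV indep w(1) irrefl sym unfolding independent_set_def by auto
  then have "E (g w) (g a)"
    using g(1) w(1) IV unfolding graph_hom_def by blast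
  then have "E y x"
    using g(3) w(2) a(1) by simp
  then show False
    using sym \<open>\<not> E x y\<close> \<open>x \<in> V\<close> \<open>y \<in> V\<close> by blast
qed

lemma no_finite_maximal_clique:
  assumes "simple_graph V E" "infinite V" "connected_graph V E" "HE_homogeneous V E"
    and "finite C"
  shows "\<not> maximal_clique V E C"
proof
  assume max: "maximal_clique V E C"
  then have CV: "C \<subseteq> V" and cl: "clique V E C"
    unfolding maximal_clique_def clique_def by auto
  have irrefl: "\<forall>x\<in>V. \<not> E x x" and sym: "\<forall>x\<in>V. \<forall>y\<in>V. E x y \<longrightarrow> E y x"
    using assms(1) unfolding simple_graph_def by auto
  have "C \<noteq> {}"
  proof
    assume "C = {}"
    obtain x where "x \<in> V"
      using infinite_imp_nonempty[OF assms(2)] by blast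
    then have "clique V E {x}"
      unfolding clique_def by simp
    then show False
      using max \<open>C = {}\<close> unfolding maximal_clique_def by blast
  qed
  moreover have "\<not> V \<subseteq> C"
    using assms(2,5) rev_finite_subset by blast
  ultimately obtain c u where cu: "c \<in> C" "u \<in> V - C" "E c u"
    using connected_graph_edge_leaving[OF assms(3) CV] by blast
  define X where "X = insert u (C - {c})"
  define f where "f = (\<lambda>z. if z = u then c else z)"
  have XV: "X \<subseteq> V"
    unfolding X_def using CV cu(2) by blast
  have fX: "f ` X = C"
    unfolding X_def f_def using cu(1,2) by auto
  have "inj_on f X"
    unfolding X_def f_def inj_on_def using cu(2) by auto
  then have "graph_hom E X C f"
    using graph_hom_inj_on_into_clique[OF cl] irrefl XV fX by blast
  moreover have "finite X"
    unfolding X_def using assms(5) by simp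
  ultimately obtain g where g: "graph_hom E V V g" "\<And>z. z \<in> X \<Longrightarrow> g z = f z"
    using HE_homogeneous_extend[OF assms(4) XV CV] assms(5) by metis
  have gc: "g c \<in> V"
    using g(1) cu(1) CV unfolding graph_hom_def by blast
  have adj: "E (g c) b" if "b \<in> C" for b
  proof -
    obtain z where z: "z \<in> X" "b = f z"
      using \<open>b \<in> C\<close> fX by blast
    have "E c z"
      using z(1) cu cl unfolding X_def clique_def by auto
    then have "E (g c) (g z)"
      using g(1) cu(1) CV z(1) XV unfolding graph_hom_def by blast
    then show ?thesis
      using g(2) z by simp
  qed
  then have "g c \<notin> C"
    using irrefl gc by blast
  moreover have "clique V E (insert (g c) C)"
    using cl gc adj sym CV unfolding clique_def by blast
  ultimately show False
    using max unfolding maximal_clique_def by blast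
qed

lemma finite_maximal_clique_if_finite_degree:
  assumes "v \<in> V" "finite (degree_set V E v)"
  obtains C where "finite C" "maximal_clique V E C"
proof (rule ex_finite_maximal_extension)
  show "finite (insert v (degree_set V E v))"
    using assms(2) by simp
  show "clique V E {v}"
    using assms(1) unfolding clique_def by simp
  show "J \<subseteq> insert v (degree_set V E v)" if "clique V E J" "{v} \<subseteq> J" for J
    using that unfolding clique_def degree_set_def by auto
qed (use that in \<open>auto simp: maximal_clique_def\<close>)

lemma finite_maximal_independent_set_if_finite_codegree:
  assumes "simple_graph V E" "v \<in> V" "finite (codegree_set V E v)"
  obtains I where "finite I" "maximal_independent_set V E I"
proof (rule ex_finite_maximal_extension)
  show "finite (insert v (codegree_set V E v))"
    using assms(3) by simp
  show "independent_set V E {v}"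
    using assms(1,2) unfolding independent_set_def simple_graph_def by simp
  show "J \<subseteq> insert v (codegree_set V E v)" if "independent_set V E J" "{v} \<subseteq> J" for J
    using that unfolding independent_set_def codegree_set_def by auto
qed (use that in \<open>auto simp: maximal_independent_set_def\<close>)

theorem proposition5p5:
  fixes V :: "'a set" and E :: "'a \<Rightarrow> 'a \<Rightarrow> bool"
  assumes "simple_graph V E"
    and "countable V" and "infinite V"
    and "connected_graph V E"
    and "HE_homogeneous V E"
    and "\<exists>x\<in>V. \<exists>y\<in>V. x \<noteq> y \<and> \<not> E x y"
  shows "(\<nexists>I. finite I \<and> maximal_independent_set V E I)
    \<and> (\<nexists>C. finite C \<and> maximal_clique V E C)
    \<and> (\<forall>v\<in>V. infinite (degree_set V E v) \<and> infinite (codegree_set V E v))"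
proof -
  have no_indep: "\<nexists>I. finite I \<and> maximal_independent_set V E I"
    using no_finite_maximal_independent_set[OF assms(1,5)] assms(6) by blast
  have no_clique: "\<nexists>C. finite C \<and> maximal_clique V E C"
    using no_finite_maximal_clique[OF assms(1,3,4,5)] by blast
  have "\<forall>v\<in>V. infinite (degree_set V E v) \<and> infinite (codegree_set V E v)"
    using finite_maximal_clique_if_finite_degree no_clique
      finite_maximal_independent_set_if_finite_codegree[OF assms(1)] no_indep by metis
  with no_indep no_clique show ?thesis
    by blast
qed

end
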